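(* Let $\mathbb{k}$ be a commutative ring, $M$ a $\mathbb{k}$-module with a descending filtration by $\mathbb{k}$-submodules $M=M_0\supseteq M_1\supseteq\cdots$, $G^{(1)}\subseteq GL^{(1)}_{\mathbb{k}}(M)$ a subgroup and $T\subseteq \mathrm{End}^{(1)}_{\mathbb{k}}(M)$ a $\mathbb{k}$-submodule such that the pair $(T,G^{(1)})$ is of pointwise weak Lie type, i.e. for every $i\ge1$: (a) for every $\xi\in T^{(i)}$ and $z\in M$ there exists $g\in G^{(i)}$ such that, if $\mathrm{ord}(\xi(z))<\infty$, then $\mathrm{ord}((g-\mathrm{Id}-\xi)(z))\ge 2\,\mathrm{ord}(\xi)+\mathrm{ord}(z)$; (b) for every $g\in G^{(i)}$ and $z\in M$ there exists $\xi\in T^{(i)}$ such that, if $\mathrm{ord}((g-\mathrm{Id})(z))<\infty$, then $\mathrm{ord}((g-\mathrm{Id}-\xi)(z))\ge 2\,\mathrm{ord}(g-\mathrm{Id})+\mathrm{ord}(z)$. Let $z\in M$ and $N\ge 0$ an integer. Then: 1. If $\overline{T^{(k)}(z)}\supseteq M_{N+k+\mathrm{ord}(z)}$ for every $k\ge1$, then $\overline{G^{(k)}z}\supseteq\{z\}+M_{N+k+\mathrm{ord}(z)}$ for every $k>N$. 2. If $\overline{G^{(k)}z}\supseteq\{z\}+M_{N+k+\mathrm{ord}(z)}$ for every $k\ge1$, then $\overline{T^{(k)}(z)}\supseteq M_{N+k+\mathrm{ord}(z)}$ for every $k>N$.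
   Context: For $z\in M$, $\mathrm{ord}(z)=\sup\{j: z\in M_j\}$. For $i\ge0$, $\mathrm{End}^{(i)}_{\mathbb{k}}(M)=\{\phi\in \mathrm{End}_{\mathbb{k}}(M): \phi(M_j)\subseteq M_{j+i}\ \forall j\ge 0\}$, and for $\phi\in\mathrm{End}_{\mathbb{k}}(M)$, $\mathrm{ord}(\phi)=\sup\{j:\phi\in\mathrm{End}^{(j)}_{\mathbb{k}}(M)\}$. $GL^{(0)}_{\mathbb{k}}(M)$ is the group of $\mathbb{k}$-linear automorphisms $g$ with $g(M_j)\subseteq M_j$, $g^{-1}(M_j)\subseteq M_j$ for all $j$; for $i\ge1$, $GL^{(i)}_{\mathbb{k}}(M)=\{g\in GL^{(0)}_{\mathbb{k}}(M): g-\mathrm{Id},g^{-1}-\mathrm{Id}\in\mathrm{End}^{(i)}_{\mathbb{k}}(M)\}$. $G^{(i)}=G^{(1)}\cap GL^{(i)}_{\mathbb{k}}(M)$, $T^{(i)}=T\cap\mathrm{End}^{(i)}_{\mathbb{k}}(M)$, $T^{(k)}(z)=\{\xi(z):\xi\in T^{(k)}\}$, $G^{(k)}z$ is the orbit of $z$. For $X\subseteq M$, $\overline{X}=\bigcap_{j\ge1}(X+M_j)$. *)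

theory Defs
  imports Complex_Main "HOL-Library.Extended_Nat"
begin

definition filtration :: "('k::comm_ring_1 \<Rightarrow> 'm::ab_group_add \<Rightarrow> 'm) \<Rightarrow> (nat \<Rightarrow> 'm set) \<Rightarrow> bool" where
  "filtration s Mf \<longleftrightarrow> module s \<and> Mf 0 = UNIV \<and> (\<forall>j. module.subspace s (Mf j))
     \<and> (\<forall>j. Mf (Suc j) \<subseteq> Mf j)"

definition ordv :: "(nat \<Rightarrow> 'm set) \<Rightarrow> 'm \<Rightarrow> enat" where
  "ordv Mf z = Sup {enat j | j. z \<in> Mf j}"

definition Mfe :: "(nat \<Rightarrow> 'm set) \<Rightarrow> enat \<Rightarrow> 'm set" where
  "Mfe Mf e = (case e of enat n \<Rightarrow> Mf n | \<infinity> \<Rightarrow> (\<Inter>j. Mf j))"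

definition End_ord :: "('k::comm_ring_1 \<Rightarrow> 'm::ab_group_add \<Rightarrow> 'm) \<Rightarrow> (nat \<Rightarrow> 'm set) \<Rightarrow> nat \<Rightarrow> ('m \<Rightarrow> 'm) set" where
  "End_ord s Mf i = {\<phi>. module_hom s s \<phi> \<and> (\<forall>j. \<phi> ` Mf j \<subseteq> Mf (j + i))}"

definition ordE :: "('k::comm_ring_1 \<Rightarrow> 'm::ab_group_add \<Rightarrow> 'm) \<Rightarrow> (nat \<Rightarrow> 'm set) \<Rightarrow> ('m \<Rightarrow> 'm) \<Rightarrow> enat" where
  "ordE s Mf \<phi> = Sup {enat j | j. \<phi> \<in> End_ord s Mf j}"

definition GL0 :: "('k::comm_ring_1 \<Rightarrow> 'm::ab_group_add \<Rightarrow> 'm) \<Rightarrow> (nat \<Rightarrow> 'm set) \<Rightarrow> ('m \<Rightarrow> 'm) set" where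
  "GL0 s Mf = {g. module_hom s s g \<and> bij g \<and> (\<forall>j. g ` Mf j \<subseteq> Mf j \<and> inv g ` Mf j \<subseteq> Mf j)}"

definition GL_ord :: "('k::comm_ring_1 \<Rightarrow> 'm::ab_group_add \<Rightarrow> 'm) \<Rightarrow> (nat \<Rightarrow> 'm set) \<Rightarrow> nat \<Rightarrow> ('m \<Rightarrow> 'm) set" where
  "GL_ord s Mf i = {g \<in> GL0 s Mf. (\<lambda>x. g x - x) \<in> End_ord s Mf i \<and> (\<lambda>x. inv g x - x) \<in> End_ord s Mf i}"

definition is_subgroup_fun :: "('m \<Rightarrow> 'm) set \<Rightarrow> bool" where
  "is_subgroup_fun G \<longleftrightarrow> id \<in> G \<and> (\<forall>g\<in>G. \<forall>h\<in>G. g \<circ> h \<in> G) \<and> (\<forall>g\<in>G. inv g \<in> G)"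

definition is_End_submodule :: "('k::comm_ring_1 \<Rightarrow> 'm::ab_group_add \<Rightarrow> 'm) \<Rightarrow> ('m \<Rightarrow> 'm) set \<Rightarrow> bool" where
  "is_End_submodule s T \<longleftrightarrow> (\<lambda>x. 0) \<in> T \<and> (\<forall>\<xi>\<in>T. \<forall>\<eta>\<in>T. (\<lambda>x. \<xi> x + \<eta> x) \<in> T)
     \<and> (\<forall>c. \<forall>\<xi>\<in>T. (\<lambda>x. s c (\<xi> x)) \<in> T)"

definition pointwise_weak_Lie_type ::
  "('k::comm_ring_1 \<Rightarrow> 'm::ab_group_add \<Rightarrow> 'm) \<Rightarrow> (nat \<Rightarrow> 'm set) \<Rightarrow> ('m \<Rightarrow> 'm) set \<Rightarrow> ('m \<Rightarrow> 'm) set \<Rightarrow> bool" where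
  "pointwise_weak_Lie_type s Mf T G \<longleftrightarrow>
    (\<forall>i\<ge>1.
      (\<forall>\<xi>\<in>T \<inter> End_ord s Mf i. \<forall>z. \<exists>g\<in>G \<inter> GL_ord s Mf i.
          ordv Mf (\<xi> z) < \<infinity> \<longrightarrow>
          ordv Mf (g z - z - \<xi> z) \<ge> 2 * ordE s Mf \<xi> + ordv Mf z) \<and>
      (\<forall>g\<in>G \<inter> GL_ord s Mf i. \<forall>z. \<exists>\<xi>\<in>T \<inter> End_ord s Mf i.
          ordv Mf (g z - z) < \<infinity> \<longrightarrow>
          ordv Mf (g z - z - \<xi> z) \<ge> 2 * ordE s Mf (\<lambda>x. g x - x) + ordv Mf z))"

definition fclosure :: "(nat \<Rightarrow> 'm::ab_group_add set) \<Rightarrow> 'm set \<Rightarrow> 'm set" where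
  "fclosure Mf X = (\<Inter>j\<in>{1..}. {x + m | x m. x \<in> X \<and> m \<in> Mf j})"

end

theory Submission
  imports Defs
begin

text \<open>Write \<open>n = ord z\<close>. By the Lie-type condition, every \<open>\<xi> \<in> T^(k)\<close> is matched by some
  \<open>g \<in> G^(k)\<close> with \<open>g z - z - \<xi> z \<in> M\<^bsub>2k+n\<^esub>\<close>, and conversely; for \<open>k > N\<close> this error lies in
  \<open>M\<^bsub>N+k+1+n\<^esub>\<close>. So each hypothesis lets us hit any point of the target set at level \<open>k\<close>
  up to an error one order deeper. Pulling that error back along the approximating map,
  which preserves the filtration, gives a target point of level \<open>k + 1\<close>. Composing the
  group elements (resp. adding the tangent vectors) obtained at levels \<open>k, k + 1, \<dots>\<close>
  therefore approximates the point to every order. If \<open>ord z = \<infinity>\<close>, the target sets consist of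
  infinitesimal perturbations of \<open>z\<close> and of \<open>0\<close>, and there is nothing to prove.\<close>

lemma filtration_module: "filtration s Mf \<Longrightarrow> module s"
  by (simp add: filtration_def)

lemma filtration_subspace: "filtration s Mf \<Longrightarrow> module.subspace s (Mf j)"
  by (simp add: filtration_def)

lemma filtration_decseq: "filtration s Mf \<Longrightarrow> decseq Mf"
  by (simp add: filtration_def decseq_Suc_iff)

lemma filtration_zero: "filtration s Mf \<Longrightarrow> 0 \<in> Mf j"
  by (rule module.subspace_0[OF filtration_module filtration_subspace])

lemma filtration_add: "filtration s Mf \<Longrightarrow> x \<in> Mf j \<Longrightarrow> y \<in> Mf j \<Longrightarrow> x + y \<in> Mf j"
  by (rule module.subspace_add[OF filtration_module filtration_subspace])

lemma filtration_diff: "filtration s Mf \<Longrightarrow> x \<in> Mf j \<Longrightarrow> y \<in> Mf j \<Longrightarrow> x - y \<in> Mf j"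
  by (rule module.subspace_diff[OF filtration_module filtration_subspace])

lemma filtration_minus: "filtration s Mf \<Longrightarrow> x \<in> Mf j \<Longrightarrow> - x \<in> Mf j"
  by (rule module.subspace_neg[OF filtration_module filtration_subspace])

lemma mem_filtration_if_le_ordv:
  assumes F: "filtration s Mf" and le: "enat p \<le> ordv Mf x"
  shows "x \<in> Mf p"
proof (cases p)
  case 0
  then show ?thesis using F by (simp add: filtration_def)
next
  case (Suc q)
  then have "enat q < ordv Mf x" using le by (simp add: Suc_ile_eq)
  then obtain j where "x \<in> Mf j" "q < j" by (auto simp: ordv_def less_Sup_iff)
  then show ?thesis using Suc decseqD[OF filtration_decseq[OF F], of p j] by auto
qed

lemma fclosure_iff: "x \<in> fclosure Mf X \<longleftrightarrow> (\<forall>j\<ge>1. \<exists>y\<in>X. x - y \<in> Mf j)"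
proof -
  have "x \<in> {y + m | y m. y \<in> X \<and> m \<in> Mf j} \<longleftrightarrow> (\<exists>y\<in>X. x - y \<in> Mf j)" for j
  proof
    assume "\<exists>y\<in>X. x - y \<in> Mf j"
    then obtain y where "y \<in> X" "x - y \<in> Mf j" by blast
    then show "x \<in> {y + m | y m. y \<in> X \<and> m \<in> Mf j}"
      by (intro CollectI exI[of _ y] exI[of _ "x - y"]) simp
  qed (auto intro: bexI[rotated] simp: add_diff_cancel_left')
  then show ?thesis unfolding fclosure_def by blast
qed

lemma fclosure_add_infinitesimal: "y \<in> X \<Longrightarrow> m \<in> (\<Inter>j. Mf j) \<Longrightarrow> y + m \<in> fclosure Mf X"
  unfolding fclosure_iff by force

lemma End_ord_apply: "\<phi> \<in> End_ord s Mf k \<Longrightarrow> x \<in> Mf j \<Longrightarrow> \<phi> x \<in> Mf (j + k)"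
  unfolding End_ord_def by blast

lemma ordE_ge_if_End_ord: "\<phi> \<in> End_ord s Mf k \<Longrightarrow> enat k \<le> ordE s Mf \<phi>"
  unfolding ordE_def by (rule Sup_upper) auto

lemma End_ord_antimono:
  assumes F: "filtration s Mf" and "k \<le> k'" and \<phi>: "\<phi> \<in> End_ord s Mf k'"
  shows "\<phi> \<in> End_ord s Mf k"
  using \<phi> decseqD[OF filtration_decseq[OF F], of "j + k" "j + k'" for j] \<open>k \<le> k'\<close>
  unfolding End_ord_def by fastforce

lemma zero_End_ord: "filtration s Mf \<Longrightarrow> (\<lambda>x. 0) \<in> End_ord s Mf k"
  using filtration_zero filtration_module
  by (fastforce simp: End_ord_def module_hom_iff module.scale_zero_right)

lemma add_End_ord:
  assumes F: "filtration s Mf" and "\<phi> \<in> End_ord s Mf k" "\<psi> \<in> End_ord s Mf k"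
  shows "(\<lambda>x. \<phi> x + \<psi> x) \<in> End_ord s Mf k"
  using assms filtration_add[OF F]
  by (auto simp: End_ord_def module_hom_iff module.scale_right_distrib image_subset_iff)

lemma displacement_comp_End_ord:
  assumes F: "filtration s Mf" and g: "module_hom s s g" and h: "module_hom s s h"
    and h_filt: "\<And>j. h ` Mf j \<subseteq> Mf j"
    and g_disp: "(\<lambda>x. g x - x) \<in> End_ord s Mf k" and h_disp: "(\<lambda>x. h x - x) \<in> End_ord s Mf k"
  shows "(\<lambda>x. (g \<circ> h) x - x) \<in> End_ord s Mf k"
proof -
  have "module_hom s s (\<lambda>x. (g \<circ> h) x - x)"
    using g h filtration_module[OF F] by (auto simp: module_hom_iff module.scale_right_diff_distrib)
  moreover have "(g \<circ> h) x - x \<in> Mf (j + k)" if "x \<in> Mf j" for x j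
  proof -
    have "g (h x) - h x \<in> Mf (j + k)" using End_ord_apply[OF g_disp] h_filt that by blast
    moreover have "h x - x \<in> Mf (j + k)" using End_ord_apply[OF h_disp that] by simp
    ultimately show ?thesis using filtration_add[OF F] by fastforce
  qed
  ultimately show ?thesis unfolding End_ord_def by blast
qed

lemma GL0_inv: "g \<in> GL0 s Mf \<Longrightarrow> inv g \<in> GL0 s Mf"
  by (auto simp: GL0_def bij_imp_bij_inv inv_inv_eq bij_module_hom_imp_inv_module_hom)

lemma GL0_comp: "g \<in> GL0 s Mf \<Longrightarrow> h \<in> GL0 s Mf \<Longrightarrow> g \<circ> h \<in> GL0 s Mf"
  by (auto simp: GL0_def module_hom_compose bij_comp o_inv_distrib image_subset_iff)

lemma id_GL_ord: "filtration s Mf \<Longrightarrow> id \<in> GL_ord s Mf k"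
  using zero_End_ord[of s Mf k] filtration_module[of s Mf]
  by (simp add: GL_ord_def GL0_def module.module_hom_id)

lemma GL_ord_antimono: "filtration s Mf \<Longrightarrow> k \<le> k' \<Longrightarrow> g \<in> GL_ord s Mf k' \<Longrightarrow> g \<in> GL_ord s Mf k"
  using End_ord_antimono unfolding GL_ord_def by blast

lemma GL_ord_comp:
  assumes F: "filtration s Mf" and g: "g \<in> GL_ord s Mf k" and h: "h \<in> GL_ord s Mf k"
  shows "g \<circ> h \<in> GL_ord s Mf k"
proof -
  have GL0: "g \<in> GL0 s Mf" "h \<in> GL0 s Mf" "inv g \<in> GL0 s Mf" "inv h \<in> GL0 s Mf"
    using g h GL0_inv unfolding GL_ord_def by blast+
  have "(\<lambda>x. (g \<circ> h) x - x) \<in> End_ord s Mf k"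
    using GL0 g h by (intro displacement_comp_End_ord[OF F]) (auto simp: GL0_def GL_ord_def)
  moreover have "(\<lambda>x. (inv h \<circ> inv g) x - x) \<in> End_ord s Mf k"
    using GL0 g h by (intro displacement_comp_End_ord[OF F]) (auto simp: GL0_def GL_ord_def)
  moreover have "inv (g \<circ> h) = inv h \<circ> inv g"
    using GL0 by (simp add: GL0_def o_inv_distrib)
  ultimately show ?thesis using GL0_comp GL0 unfolding GL_ord_def by auto
qed

lemma subgroup_GL_ord_comp:
  assumes F: "filtration s Mf" and G_grp: "is_subgroup_fun G"
    and g: "g \<in> G \<inter> GL_ord s Mf k" and h: "h \<in> G \<inter> GL_ord s Mf (Suc k)"
  shows "g \<circ> h \<in> G \<inter> GL_ord s Mf k"
proof -
  have "h \<in> GL_ord s Mf k" using h GL_ord_antimono[OF F, of k "Suc k"] by auto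
  then show ?thesis using g h G_grp GL_ord_comp[OF F] unfolding is_subgroup_fun_def by auto
qed

section \<open>Successive approximation\<close>

definition filtration_isometry :: "(nat \<Rightarrow> 'm::ab_group_add set) \<Rightarrow> ('m \<Rightarrow> 'm) \<Rightarrow> bool" where
  "filtration_isometry Mf u \<longleftrightarrow> (\<forall>j x y. u x - u y \<in> Mf j \<longleftrightarrow> x - y \<in> Mf j)"

lemma GL0_filtration_isometry:
  assumes g: "g \<in> GL0 s Mf"
  shows "filtration_isometry Mf g"
  unfolding filtration_isometry_def
proof (intro allI)
  fix j x y
  have hom: "module_hom s s g" and "bij g" and "g ` Mf j \<subseteq> Mf j" "inv g ` Mf j \<subseteq> Mf j"
    using g unfolding GL0_def by auto
  moreover have "g x - g y = g (x - y)" using module_hom.diff[OF hom] by simp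
  moreover have "inv g (g (x - y)) = x - y" using \<open>bij g\<close> by (simp add: bij_is_inj)
  ultimately show "g x - g y \<in> Mf j \<longleftrightarrow> x - y \<in> Mf j" by (metis image_subset_iff)
qed

lemma GL_ord_surj_filtration_isometry:
  "g \<in> GL_ord s Mf k \<Longrightarrow> surj g \<and> filtration_isometry Mf g"
  using GL0_filtration_isometry unfolding GL_ord_def GL0_def by (auto simp: bij_is_surj)

lemma translation_filtration_isometry: "filtration_isometry Mf (\<lambda>x. x + a)"
  by (simp add: filtration_isometry_def)

text \<open>The error left by \<open>u \<in> H k\<close> is pulled back along the isometry \<open>u\<close> to a point of
  \<open>p + M\<^bsub>k+1+d\<^esub>\<close>, which is then approximated by \<open>H (k + 1)\<close>.\<close>
lemma fclosure_orbit_by_successive_approximation: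
  fixes Mf :: "nat \<Rightarrow> 'm::ab_group_add set" and H :: "nat \<Rightarrow> ('m \<Rightarrow> 'm) set"
  assumes dec: "decseq Mf"
    and iso: "\<And>k u. u \<in> H k \<Longrightarrow> surj u \<and> filtration_isometry Mf u"
    and comp: "\<And>k u v. u \<in> H k \<Longrightarrow> v \<in> H (Suc k) \<Longrightarrow> u \<circ> v \<in> H k"
    and step: "\<And>k x. K \<le> k \<Longrightarrow> x - p \<in> Mf (k + d) \<Longrightarrow> \<exists>u\<in>H k. x - u p \<in> Mf (Suc k + d)"
    and k: "K \<le> k" and x: "x - p \<in> Mf (k + d)"
  shows "x \<in> fclosure Mf ((\<lambda>u. u p) ` H k)"
proof -
  have approx: "\<exists>u\<in>H k. x - u p \<in> Mf (Suc k + d + r)" if "K \<le> k" "x - p \<in> Mf (k + d)" for r k x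
    using that
  proof (induction r arbitrary: k x)
    case 0
    then show ?case using step by simp
  next
    case (Suc r)
    obtain u where u: "u \<in> H k" "x - u p \<in> Mf (Suc k + d)" using step Suc.prems by blast
    have u_iso: "filtration_isometry Mf u" and "surj u" using iso u(1) by auto
    then obtain w where w: "x = u w" by (metis surjD)
    have "w - p \<in> Mf (Suc k + d)" using u(2) u_iso w by (simp add: filtration_isometry_def)
    then obtain v where v: "v \<in> H (Suc k)" "w - v p \<in> Mf (Suc (Suc k) + d + r)"
      using Suc.IH[of "Suc k" w] Suc.prems(1) by auto
    then have "x - (u \<circ> v) p \<in> Mf (Suc k + d + Suc r)"
      using u_iso w by (simp add: filtration_isometry_def)
    then show ?case using comp u(1) v(1) by blast
  qed
  show ?thesis
    unfolding fclosure_iff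
  proof (intro allI impI)
    fix j :: nat
    obtain u where "u \<in> H k" "x - u p \<in> Mf (Suc k + d + j)" using approx k x by blast
    moreover have "Mf (Suc k + d + j) \<subseteq> Mf j" using decseqD[OF dec] by simp
    ultimately show "\<exists>y\<in>(\<lambda>u. u p) ` H k. x - y \<in> Mf j" by blast
  qed
qed

section \<open>Pairs of pointwise weak Lie type\<close>

lemma Lie_type_group_approx:
  assumes F: "filtration s Mf" and Lie: "pointwise_weak_Lie_type s Mf T G" and "id \<in> G"
    and k: "1 \<le> k" and \<xi>: "\<xi> \<in> T \<inter> End_ord s Mf k" and z: "ordv Mf z = enat n"
  obtains g where "g \<in> G \<inter> GL_ord s Mf k" "g z - z - \<xi> z \<in> Mf (2 * k + n)"
proof (cases "ordv Mf (\<xi> z) < \<infinity>")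
  case True
  obtain g where g: "g \<in> G \<inter> GL_ord s Mf k"
    and ord: "2 * ordE s Mf \<xi> + ordv Mf z \<le> ordv Mf (g z - z - \<xi> z)"
    using Lie k \<xi> True unfolding pointwise_weak_Lie_type_def by blast
  have "enat k \<le> ordE s Mf \<xi>" using \<xi> by (simp add: ordE_ge_if_End_ord)
  then have "enat (2 * k + n) \<le> 2 * ordE s Mf \<xi> + ordv Mf z"
    using z by (cases "ordE s Mf \<xi>") (simp_all add: numeral_eq_enat)
  then show ?thesis using that g ord mem_filtration_if_le_ordv[OF F] order_trans by blast
next
  case False
  then have "- \<xi> z \<in> Mf (2 * k + n)"
    using mem_filtration_if_le_ordv[OF F] filtration_minus[OF F] by simp
  then show ?thesis using that[of id] \<open>id \<in> G\<close> id_GL_ord[OF F] by simp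
qed

lemma Lie_type_tangent_approx:
  assumes F: "filtration s Mf" and Lie: "pointwise_weak_Lie_type s Mf T G" and "(\<lambda>x. 0) \<in> T"
    and k: "1 \<le> k" and g: "g \<in> G \<inter> GL_ord s Mf k" and z: "ordv Mf z = enat n"
  obtains \<xi> where "\<xi> \<in> T \<inter> End_ord s Mf k" "g z - z - \<xi> z \<in> Mf (2 * k + n)"
proof (cases "ordv Mf (g z - z) < \<infinity>")
  case True
  obtain \<xi> where \<xi>: "\<xi> \<in> T \<inter> End_ord s Mf k"
    and ord: "2 * ordE s Mf (\<lambda>x. g x - x) + ordv Mf z \<le> ordv Mf (g z - z - \<xi> z)"
    using Lie k g True unfolding pointwise_weak_Lie_type_def by blast
  have "enat k \<le> ordE s Mf (\<lambda>x. g x - x)"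
    using g by (simp add: GL_ord_def ordE_ge_if_End_ord)
  then have "enat (2 * k + n) \<le> 2 * ordE s Mf (\<lambda>x. g x - x) + ordv Mf z"
    using z by (cases "ordE s Mf (\<lambda>x. g x - x)") (simp_all add: numeral_eq_enat)
  then show ?thesis using that \<xi> ord mem_filtration_if_le_ordv[OF F] order_trans by blast
next
  case False
  then have "g z - z \<in> Mf (2 * k + n)" using mem_filtration_if_le_ordv[OF F] by simp
  then show ?thesis using that[of "\<lambda>x. 0"] \<open>(\<lambda>x. 0) \<in> T\<close> zero_End_ord[OF F] by simp
qed

lemma orbit_closure_if_tangent_closure:
  assumes F: "filtration s Mf" and G_grp: "is_subgroup_fun G"
    and Lie: "pointwise_weak_Lie_type s Mf T G" and z: "ordv Mf z = enat n"
    and hyp: "\<forall>k\<ge>1. Mf (N + k + n) \<subseteq> fclosure Mf ((\<lambda>\<xi>. \<xi> z) ` (T \<inter> End_ord s Mf k))"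
  shows "\<forall>k>N. {z + m | m. m \<in> Mf (N + k + n)} \<subseteq> fclosure Mf ((\<lambda>g. g z) ` (G \<inter> GL_ord s Mf k))"
proof (intro allI impI subsetI)
  have step: "\<exists>g\<in>G \<inter> GL_ord s Mf k. x - g z \<in> Mf (Suc k + (N + n))"
    if k: "Suc N \<le> k" and x: "x - z \<in> Mf (k + (N + n))" for k x
  proof -
    have "x - z \<in> Mf (N + k + n)" using x by (simp add: ac_simps)
    moreover have "1 \<le> k" using k by simp
    ultimately have "x - z \<in> fclosure Mf ((\<lambda>\<xi>. \<xi> z) ` (T \<inter> End_ord s Mf k))"
      using hyp by blast
    then obtain \<xi> where \<xi>: "\<xi> \<in> T \<inter> End_ord s Mf k" and "x - z - \<xi> z \<in> Mf (Suc k + (N + n))"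
      unfolding fclosure_iff by fastforce
    moreover obtain g where "g \<in> G \<inter> GL_ord s Mf k" and "g z - z - \<xi> z \<in> Mf (2 * k + n)"
      using Lie_type_group_approx[OF F Lie _ _ \<xi> z] G_grp k unfolding is_subgroup_fun_def by auto
    moreover have "Mf (2 * k + n) \<subseteq> Mf (Suc k + (N + n))"
      \<comment> \<open>the only place where \<open>k > N\<close> is used\<close>
      using k decseqD[OF filtration_decseq[OF F]] by simp
    moreover have "x - g z = (x - z - \<xi> z) - (g z - z - \<xi> z)" by simp
    ultimately show ?thesis using filtration_diff[OF F] by (metis subsetD)
  qed
  fix k x assume "N < k" and "x \<in> {z + m | m. m \<in> Mf (N + k + n)}"
  then have "Suc N \<le> k" and "x - z \<in> Mf (k + (N + n))" by (auto simp: ac_simps)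
  then show "x \<in> fclosure Mf ((\<lambda>g. g z) ` (G \<inter> GL_ord s Mf k))"
    using GL_ord_surj_filtration_isometry
    by (intro fclosure_orbit_by_successive_approximation
        [OF filtration_decseq[OF F] _ subgroup_GL_ord_comp[OF F G_grp] step]) auto
qed

lemma tangent_closure_if_orbit_closure:
  assumes F: "filtration s Mf" and T_mod: "is_End_submodule s T"
    and Lie: "pointwise_weak_Lie_type s Mf T G" and z: "ordv Mf z = enat n"
    and hyp: "\<forall>k\<ge>1. {z + m | m. m \<in> Mf (N + k + n)} \<subseteq> fclosure Mf ((\<lambda>g. g z) ` (G \<inter> GL_ord s Mf k))"
  shows "\<forall>k>N. Mf (N + k + n) \<subseteq> fclosure Mf ((\<lambda>\<xi>. \<xi> z) ` (T \<inter> End_ord s Mf k))"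
proof (intro allI impI subsetI)
  \<comment> \<open>\<open>T^(k)(z)\<close> is the orbit of \<open>0\<close> under the translations by the vectors \<open>\<xi> z\<close>.\<close>
  define H where "H k = (\<lambda>\<xi> x. x + \<xi> z) ` (T \<inter> End_ord s Mf k)" for k
  have step: "\<exists>u\<in>H k. x - u 0 \<in> Mf (Suc k + (N + n))"
    if k: "Suc N \<le> k" and x: "x - 0 \<in> Mf (k + (N + n))" for k x
  proof -
    have "z + x \<in> {z + m | m. m \<in> Mf (N + k + n)}" using x by (simp add: ac_simps)
    moreover have "1 \<le> k" using k by simp
    ultimately have "z + x \<in> fclosure Mf ((\<lambda>g. g z) ` (G \<inter> GL_ord s Mf k))"
      using hyp by blast
    then obtain g where g: "g \<in> G \<inter> GL_ord s Mf k" and "z + x - g z \<in> Mf (Suc k + (N + n))"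
      unfolding fclosure_iff by fastforce
    moreover obtain \<xi> where \<xi>: "\<xi> \<in> T \<inter> End_ord s Mf k" and "g z - z - \<xi> z \<in> Mf (2 * k + n)"
      using Lie_type_tangent_approx[OF F Lie _ _ g z] T_mod k unfolding is_End_submodule_def by auto
    moreover have "Mf (2 * k + n) \<subseteq> Mf (Suc k + (N + n))"
      using k decseqD[OF filtration_decseq[OF F]] by simp
    moreover have "x - \<xi> z = (z + x - g z) + (g z - z - \<xi> z)" by simp
    ultimately have "x - \<xi> z \<in> Mf (Suc k + (N + n))" using filtration_add[OF F] by (metis subsetD)
    then show ?thesis using \<xi> by (auto simp: H_def)
  qed
  have comp: "u \<circ> v \<in> H k" if "u \<in> H k" "v \<in> H (Suc k)" for u v k
  proof -
    obtain \<xi> where u: "u = (\<lambda>x. x + \<xi> z)" "\<xi> \<in> T \<inter> End_ord s Mf k"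
      using \<open>u \<in> H k\<close> unfolding H_def by blast
    obtain \<eta> where v: "v = (\<lambda>x. x + \<eta> z)" "\<eta> \<in> T \<inter> End_ord s Mf (Suc k)"
      using \<open>v \<in> H (Suc k)\<close> unfolding H_def by blast
    have "(\<lambda>x. \<xi> x + \<eta> x) \<in> T \<inter> End_ord s Mf k"
      using u v T_mod add_End_ord[OF F] End_ord_antimono[OF F, of k "Suc k"]
      unfolding is_End_submodule_def by auto
    moreover have "u \<circ> v = (\<lambda>x. x + (\<xi> z + \<eta> z))" using u v by (auto simp: ac_simps)
    ultimately show ?thesis unfolding H_def by force
  qed
  have iso: "surj u \<and> filtration_isometry Mf u" if "u \<in> H k" for u k
    using that translation_filtration_isometry unfolding H_def by auto
  have orbit_H: "(\<lambda>u. u 0) ` H k = (\<lambda>\<xi>. \<xi> z) ` (T \<inter> End_ord s Mf k)" for k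
    by (auto simp: H_def image_image)
  fix k x assume "N < k" and "x \<in> Mf (N + k + n)"
  then have "Suc N \<le> k" and "x - 0 \<in> Mf (k + (N + n))" by (simp_all add: ac_simps)
  then show "x \<in> fclosure Mf ((\<lambda>\<xi>. \<xi> z) ` (T \<inter> End_ord s Mf k))"
    unfolding orbit_H[symmetric]
    by (intro fclosure_orbit_by_successive_approximation[OF filtration_decseq[OF F] iso comp step])
qed

lemma infinitesimals_subset_closures:
  assumes F: "filtration s Mf" and G_grp: "is_subgroup_fun G" and T_mod: "is_End_submodule s T"
  shows "{z + m | m. m \<in> (\<Inter>j. Mf j)} \<subseteq> fclosure Mf ((\<lambda>g. g z) ` (G \<inter> GL_ord s Mf k))"
    and "(\<Inter>j. Mf j) \<subseteq> fclosure Mf ((\<lambda>\<xi>. \<xi> z) ` (T \<inter> End_ord s Mf k))"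
proof -
  have "id \<in> G \<inter> GL_ord s Mf k"
    using G_grp id_GL_ord[OF F] unfolding is_subgroup_fun_def by blast
  then have "z \<in> (\<lambda>g. g z) ` (G \<inter> GL_ord s Mf k)"
    using image_eqI[of z "\<lambda>g. g z" id] by simp
  from fclosure_add_infinitesimal[OF this]
  show "{z + m | m. m \<in> (\<Inter>j. Mf j)} \<subseteq> fclosure Mf ((\<lambda>g. g z) ` (G \<inter> GL_ord s Mf k))"
    by blast
  have "(\<lambda>x. 0) \<in> T \<inter> End_ord s Mf k"
    using T_mod zero_End_ord[OF F] unfolding is_End_submodule_def by blast
  then have "0 \<in> (\<lambda>\<xi>. \<xi> z) ` (T \<inter> End_ord s Mf k)"
    using image_eqI[of 0 "\<lambda>\<xi>. \<xi> z" "\<lambda>x. 0"] by simp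
  from fclosure_add_infinitesimal[OF this]
  show "(\<Inter>j. Mf j) \<subseteq> fclosure Mf ((\<lambda>\<xi>. \<xi> z) ` (T \<inter> End_ord s Mf k))"
    by (metis add_0 subsetI)
qed

theorem theorem4p3:
  fixes s :: "'k::comm_ring_1 \<Rightarrow> 'm::ab_group_add \<Rightarrow> 'm"
    and Mf :: "nat \<Rightarrow> 'm set"
    and G :: "('m \<Rightarrow> 'm) set" and T :: "('m \<Rightarrow> 'm) set"
    and z :: 'm and N :: nat
  assumes filt: "filtration s Mf"
    and G_sub: "G \<subseteq> GL_ord s Mf 1" and G_grp: "is_subgroup_fun G"
    and T_sub: "T \<subseteq> End_ord s Mf 1" and T_mod: "is_End_submodule s T"
    and Lie: "pointwise_weak_Lie_type s Mf T G"
  shows "((\<forall>k\<ge>1. fclosure Mf ((\<lambda>\<xi>. \<xi> z) ` (T \<inter> End_ord s Mf k))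
                   \<supseteq> Mfe Mf (enat (N + k) + ordv Mf z))
          \<longrightarrow> (\<forall>k>N. fclosure Mf ((\<lambda>g. g z) ` (G \<inter> GL_ord s Mf k))
                   \<supseteq> {z + m | m. m \<in> Mfe Mf (enat (N + k) + ordv Mf z)}))
       \<and> ((\<forall>k\<ge>1. fclosure Mf ((\<lambda>g. g z) ` (G \<inter> GL_ord s Mf k))
                   \<supseteq> {z + m | m. m \<in> Mfe Mf (enat (N + k) + ordv Mf z)})
          \<longrightarrow> (\<forall>k>N. fclosure Mf ((\<lambda>\<xi>. \<xi> z) ` (T \<inter> End_ord s Mf k))
                   \<supseteq> Mfe Mf (enat (N + k) + ordv Mf z)))"
proof (cases "ordv Mf z")
  case (enat n)
  then have Mfe: "Mfe Mf (enat (N + k) + ordv Mf z) = Mf (N + k + n)" for k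
    by (simp add: Mfe_def)
  show ?thesis
    unfolding Mfe
    by (intro conjI impI orbit_closure_if_tangent_closure[OF filt G_grp Lie enat]
        tangent_closure_if_orbit_closure[OF filt T_mod Lie enat]) assumption+
next
  case infinity
  then have "Mfe Mf (enat (N + k) + ordv Mf z) = (\<Inter>j. Mf j)" for k
    by (simp add: Mfe_def)
  then show ?thesis
    using infinitesimals_subset_closures[OF filt G_grp T_mod] by simp
qed

end
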